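(* Let $C$ be a cycle of goods, $N=\{1,2,3\}$ a set of agents with utility functions $u_1,u_2,u_3$ on $C$, and $c$ a real number with $0<c\le1$. Suppose that for two different agents $i,j\in N$ there is a bundle $A$ of some $\mathrm{mms}(i)$-split and a bundle $B$ of some $\mathrm{mms}(j)$-split of $C$ such that $u_i(A\cap B)\ge c\cdot\mathrm{mms}(i)$. Then there exists a $c$-sufficient allocation of the goods of $C$ to the agents in $N$.
   Context: A cycle of goods has goods $v_1,\dots,v_m$ with edges $v_iv_{i+1}$ and $v_mv_1$. A utility function assigns a non-negative real to each good, extended additively to sets. A bundle is a set of goods inducing a connected subgraph (empty allowed); a $3$-split is a sequence of $3$ pairwise disjoint bundles (possibly empty) with union all goods. $\mathrm{mms}(i)=\mathrm{mms}^{(3)}(C,u_i)=\max_{P_1,P_2,P_3}\min_k u_i(P_k)$ over all $3$-splits; an $\mathrm{mms}(i)$-split is a $3$-split attaining this maximum for $u_i$. An allocation is a $3$-split $P_1,P_2,P_3$ with $P_k$ given to agent $k$; it is $c$-sufficient if $u_k(P_k)\ge c\cdot\mathrm{mms}(k)$ for $k=1,2,3$. *)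

theory Defs
  imports Complex_Main
begin

definition cyc_adj :: "nat \<Rightarrow> nat \<Rightarrow> nat \<Rightarrow> bool" where
  "cyc_adj m x y \<longleftrightarrow> y = Suc x mod m \<or> x = Suc y mod m"

text \<open>A bundle: a set of goods inducing a connected subgraph (empty allowed).\<close>
definition is_bundle :: "nat \<Rightarrow> nat set \<Rightarrow> bool" where
  "is_bundle m S \<longleftrightarrow> S \<subseteq> {0..<m} \<and>
     (\<forall>x\<in>S. \<forall>y\<in>S. (x, y) \<in> rtrancl {(a, b). a \<in> S \<and> b \<in> S \<and> cyc_adj m a b})"

definition uset :: "(nat \<Rightarrow> real) \<Rightarrow> nat set \<Rightarrow> real" where
  "uset u S = (\<Sum>g\<in>S. u g)"

definition split3 :: "nat \<Rightarrow> (nat \<Rightarrow> nat set) \<Rightarrow> bool" where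
  "split3 m P \<longleftrightarrow> (\<forall>k\<in>{1,2,3}. is_bundle m (P k)) \<and>
     (\<forall>k\<in>{1,2,3}. \<forall>l\<in>{1,2,3}. k \<noteq> l \<longrightarrow> P k \<inter> P l = {}) \<and>
     (\<Union>k\<in>{1,2,3}. P k) = {0..<m}"

definition split_value :: "(nat \<Rightarrow> real) \<Rightarrow> (nat \<Rightarrow> nat set) \<Rightarrow> real" where
  "split_value u P = Min ((\<lambda>k. uset u (P k)) ` {1,2,3})"

definition mms :: "nat \<Rightarrow> (nat \<Rightarrow> real) \<Rightarrow> real" where
  "mms m u = Sup {split_value u P | P. split3 m P}"

definition mms_split :: "nat \<Rightarrow> (nat \<Rightarrow> real) \<Rightarrow> (nat \<Rightarrow> nat set) \<Rightarrow> bool" where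
  "mms_split m u P \<longleftrightarrow> split3 m P \<and> split_value u P = mms m u"

definition sufficient_alloc :: "nat \<Rightarrow> (nat \<Rightarrow> nat \<Rightarrow> real) \<Rightarrow> real \<Rightarrow> (nat \<Rightarrow> nat set) \<Rightarrow> bool" where
  "sufficient_alloc m u c P \<longleftrightarrow> split3 m P \<and>
     (\<forall>k\<in>{1,2,3}. uset (u k) (P k) \<ge> c * mms m (u k))"

end

theory Submission
  imports Defs
begin

(* Rotate the cycle so that agent j's mms-split consists of the consecutive arcs
   Q b = [0, e), [e, f) and [f, m); the bundles of agent i's mms-split are then consecutive
   arcs as well. Agent i can cut the cycle into three arcs [alpha, beta), [beta, gamma),
   [gamma, alpha + m), each worth at least c * mms(i) to her, whose first arc lies inside Q b:
   an arc containing the intersection of P a and Q b or, if P a and Q b together cover the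
   cycle, one of i's other bundles. Now cut the cycle at alpha, beta and f instead. The two
   later pieces contain [e, f) and [f, m) respectively, so j accepts either of them; i accepts
   the first piece and at least one of the later ones; and k accepts some piece, since the
   three are worth at least 3 * mms(k) together. So the agents can be matched to the pieces. *)

subsection \<open>Arcs of the cycle\<close>

definition rot :: "nat \<Rightarrow> nat \<Rightarrow> nat \<Rightarrow> nat" where
  "rot m r t = (r + t) mod m"

definition arc :: "nat \<Rightarrow> nat \<Rightarrow> nat \<Rightarrow> nat \<Rightarrow> nat set" where
  "arc m r A B = rot m r ` {A..<B}"

lemma rot_less: "0 < m \<Longrightarrow> rot m r t < m"
  by (simp add: rot_def)

lemma rot_add_period [simp]: "rot m r (t + m) = rot m r t"
  by (simp add: rot_def add.assoc[symmetric])

lemma rot_Suc: "rot m r (Suc t) = Suc (rot m r t) mod m"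
  by (simp add: rot_def mod_Suc_eq)

lemma rot_shift: "rot m (r + d) t = rot m r (d + t)"
  by (simp add: rot_def add.assoc)

lemma rot_eq_imp_eq:
  assumes "rot m r t = rot m r t'" "A \<le> t" "t < A + m" "A \<le> t'" "t' < A + m"
  shows "t = t'"
proof -
  have "t = t'" if eq: "rot m r t = rot m r t'" and le: "t' \<le> t" "t < A + m" "A \<le> t'" for t t'
  proof -
    obtain q where "r + t = r + t' + m * q"
      using mod_eq_nat1E[of "r + t" m "r + t'"] eq le(1) unfolding rot_def by auto
    with le show ?thesis by (cases q) auto
  qed
  with assms show ?thesis by (metis linorder_le_cases)
qed

lemma inj_on_rot: "inj_on (rot m r) {A..<A + m}"
  by (auto simp: inj_on_def intro: rot_eq_imp_eq)

lemma rot_mod_eq: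
  assumes "r mod m = r' mod m"
  shows "rot m r = rot m r'"
  unfolding rot_def fun_eq_iff by (metis assms mod_add_left_eq)

lemma arc_subset: "0 < m \<Longrightarrow> arc m r A B \<subseteq> {0..<m}"
  by (auto simp: arc_def rot_less)

lemma arc_empty [simp]: "arc m r A A = {}"
  by (simp add: arc_def)

lemma arc_eq_empty_iff: "arc m r A B = {} \<longleftrightarrow> B \<le> A"
  by (auto simp: arc_def)

lemma arc_mono: "A \<le> A' \<Longrightarrow> B' \<le> B \<Longrightarrow> arc m r A' B' \<subseteq> arc m r A B"
  by (auto simp: arc_def)

lemma arc_add_period: "arc m r (A + m) (B + m) = arc m r A B"
proof -
  have "{A + m..<B + m} = (\<lambda>t. t + m) ` {A..<B}" by simp
  then show ?thesis unfolding arc_def by (simp only: image_image rot_add_period)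
qed

lemma arc_sub_period: "m \<le> A \<Longrightarrow> m \<le> B \<Longrightarrow> arc m r (A - m) (B - m) = arc m r A B"
  using arc_add_period[of m r "A - m" "B - m"] by simp

lemma arc_shift: "arc m (r + d) A B = arc m r (d + A) (d + B)"
proof -
  have "rot m (r + d) = rot m r \<circ> (+) d" by (auto simp: rot_shift)
  moreover have "{d + A..<d + B} = (+) d ` {A..<B}" by (simp add: add.commute)
  ultimately show ?thesis unfolding arc_def by (metis image_comp)
qed

lemma arc_rebase:
  assumes m: "0 < m"
  obtains d where "d < m" "\<And>A B. arc m r A B = arc m s (d + A) (d + B)"
proof -
  \<comment> \<open>\<open>d\<close> is \<open>r - s\<close> modulo \<open>m\<close>, written without truncated subtraction\<close>
  define d where "d = (r + (m - s mod m)) mod m"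
  have "s mod m < m" using m by simp
  then have eq: "s + (r + (m - s mod m)) = r + m + m * (s div m)"
    using mult_div_mod_eq[of m s] by linarith
  have "(s + d) mod m = (s + (r + (m - s mod m))) mod m" by (simp add: d_def mod_add_right_eq)
  also have "\<dots> = r mod m" unfolding eq by simp
  finally have "(s + d) mod m = r mod m" .
  then have "rot m (s + d) = rot m r" by (rule rot_mod_eq)
  then have "arc m r A B = arc m s (d + A) (d + B)" for A B
    using arc_shift[of m s d A B] by (simp add: arc_def)
  then show ?thesis using that[of d] m by (simp add: d_def)
qed

lemma arc_full: "0 < m \<Longrightarrow> arc m r A (A + m) = {0..<m}"
  using card_image[OF inj_on_rot[of m r A]] arc_subset[of m r A "A + m"]
  by (simp add: arc_def card_subset_eq)

lemma arc_union: "A \<le> B \<Longrightarrow> B \<le> C \<Longrightarrow> arc m r A B \<union> arc m r B C = arc m r A C"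
  by (simp add: arc_def image_Un[symmetric] ivl_disj_un)

lemma arc_disjoint:
  assumes "B \<le> C" "D \<le> A + m"
  shows "arc m r A B \<inter> arc m r C D = {}"
  using assms rot_eq_imp_eq[of m r _ _ A] by (fastforce simp: arc_def)

lemma arc_Int:
  assumes "L \<le> A" "L \<le> C" "B \<le> L + m" "D \<le> L + m"
  shows "arc m r A B \<inter> arc m r C D = arc m r (max A C) (min B D)"
proof -
  have "arc m r A B \<inter> arc m r C D = rot m r ` ({A..<B} \<inter> {C..<D})"
    unfolding arc_def using assms by (intro inj_on_image_Int[OF inj_on_rot, symmetric]) auto
  then show ?thesis by (simp add: arc_def)
qed

lemma arc_Int_wrapping:
  assumes "e \<le> d" "d \<le> m" "m \<le> d + X" "X \<le> m"
  shows "arc m s d (d + X) \<inter> arc m s 0 e = arc m s 0 (min (d + X - m) e)"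
proof -
  have "min (d + X - m) e + m = min (d + X) (e + m)" using assms(3) unfolding min_def by arith
  then have "arc m s d (d + X) \<inter> arc m s (0 + m) (e + m) = arc m s (0 + m) (min (d + X - m) e + m)"
    using arc_Int[of d d m "d + X" m "e + m" s] assms by (simp add: max_def)
  then show ?thesis by (simp only: arc_add_period)
qed

lemma arc_is_bundle:
  assumes m: "0 < m"
  shows "is_bundle m (arc m r A B)"
proof -
  let ?S = "arc m r A B"
  let ?R = "{(a, b). a \<in> ?S \<and> b \<in> ?S \<and> cyc_adj m a b}"
  have forward: "(rot m r t, rot m r t') \<in> ?R\<^sup>*" if "A \<le> t" "t \<le> t'" "t' < B" for t t'
    using that(2,3)
  proof (induction t' rule: dec_induct)
    case (step n)
    have "rot m r n \<in> ?S" "rot m r (Suc n) \<in> ?S" using that(1) step by (auto simp: arc_def)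
    moreover have "cyc_adj m (rot m r n) (rot m r (Suc n))" by (simp add: cyc_adj_def rot_Suc)
    ultimately have "(rot m r n, rot m r (Suc n)) \<in> ?R" by simp
    with step show ?case by (meson Suc_lessD rtrancl_into_rtrancl)
  qed simp
  have "sym ?R" by (auto simp: sym_def cyc_adj_def)
  then have "sym (?R\<^sup>*)" by (rule sym_rtrancl)
  have "(x, y) \<in> ?R\<^sup>*" if x: "x \<in> ?S" and y: "y \<in> ?S" for x y
  proof -
    obtain t where t: "x = rot m r t" "t \<in> {A..<B}" using x unfolding arc_def by blast
    obtain t' where t': "y = rot m r t'" "t' \<in> {A..<B}" using y unfolding arc_def by blast
    show ?thesis
    proof (cases "t \<le> t'")
      case True
      then show ?thesis using forward t t' by simp
    next
      case False
      then have "(y, x) \<in> ?R\<^sup>*" using forward t t' by simp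
      with \<open>sym (?R\<^sup>*)\<close> show ?thesis by (rule symD)
    qed
  qed
  with arc_subset[OF m] show ?thesis by (auto simp: is_bundle_def)
qed

definition positions :: "nat \<Rightarrow> nat \<Rightarrow> nat set \<Rightarrow> nat set" where
  "positions m r S = {t. t < m \<and> rot m r t \<in> S}"

lemma bundle_eq_image_positions:
  assumes "is_bundle m S" "0 < m"
  shows "S = rot m r ` positions m r S"
proof
  show "rot m r ` positions m r S \<subseteq> S" by (auto simp: positions_def)
  have "S \<subseteq> rot m r ` {0..<m}" using arc_full[OF assms(2), of r 0] assms(1)
    by (simp add: arc_def is_bundle_def)
  then show "S \<subseteq> rot m r ` positions m r S" by (force simp: positions_def)
qed

lemma bundle_positions_convex:
  assumes S_bundle: "is_bundle m S" and m: "0 < m" and r: "rot m r 0 \<notin> S"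
    and t: "t \<in> positions m r S" and t': "t' \<in> positions m r S"
  shows "{min t t'..max t t'} \<subseteq> positions m r S"
proof -
  let ?T = "positions m r S"
  let ?R = "{(a, b). a \<in> S \<and> b \<in> S \<and> cyc_adj m a b}"
  have T_pos: "0 < s" if "s \<in> ?T" for s
    using that r by (auto simp: positions_def intro: Nat.gr0I)
  \<comment> \<open>Position 0 is not in \<open>S\<close>, so a step inside \<open>S\<close> never wraps from \<open>m - 1\<close> to 0\<close>
  have step_Suc: "s' = Suc s" if "s \<in> ?T" "s' \<in> ?T" "rot m r s' = Suc (rot m r s) mod m" for s s'
  proof (cases "Suc s < m")
    case True
    then show ?thesis using that rot_eq_imp_eq[of m r s' "Suc s" 0] by (simp add: positions_def rot_Suc)
  next
    case False
    with that have "Suc s = m" by (simp add: positions_def)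
    with that(3) have "rot m r s' = rot m r (0 + m)" by (metis rot_Suc add_0)
    then have "rot m r s' = rot m r 0" by (simp only: rot_add_period)
    then have "s' = 0" using that rot_eq_imp_eq[of m r s' 0 0] by (simp add: positions_def)
    with T_pos[OF that(2)] show ?thesis by simp
  qed
  have "\<exists>s\<in>?T. b = rot m r s \<and> {min t s..max t s} \<subseteq> ?T" if "(rot m r t, b) \<in> ?R\<^sup>*" for b
    using that
  proof (induction b rule: rtrancl_induct)
    case base
    then show ?case using t by auto
  next
    case (step b c)
    then obtain s where s: "s \<in> ?T" "b = rot m r s" "{min t s..max t s} \<subseteq> ?T" by blast
    have "c \<in> rot m r ` ?T" using step.hyps(2) bundle_eq_image_positions[OF S_bundle m] by auto
    then obtain s' where s': "s' \<in> ?T" "c = rot m r s'" by blast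
    have "s' = Suc s \<or> s = Suc s'"
      using step.hyps(2) step_Suc[OF s(1) s'(1)] step_Suc[OF s'(1) s(1)] s s'
      by (auto simp: cyc_adj_def)
    then have "{min t s'..max t s'} \<subseteq> insert s' {min t s..max t s}" by auto
    with s s' show ?case by blast
  qed
  moreover have "(rot m r t, rot m r t') \<in> ?R\<^sup>*"
    using S_bundle t t' by (simp add: is_bundle_def positions_def)
  ultimately obtain s where "s \<in> ?T" "rot m r t' = rot m r s" "{min t s..max t s} \<subseteq> ?T"
    by blast
  moreover from this have "s = t'" using t' rot_eq_imp_eq[of m r t' s 0] by (simp add: positions_def)
  ultimately show ?thesis by simp
qed

lemma bundle_eq_arc:
  assumes S_bundle: "is_bundle m S" and m: "0 < m" and r: "rot m r 0 \<notin> S"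
  obtains A B where "0 < A" "A \<le> B" "B \<le> m" "S = arc m r A B"
proof -
  let ?T = "positions m r S"
  note S_eq = bundle_eq_image_positions[OF S_bundle m, of r]
  show ?thesis
  proof (cases "?T = {}")
    case True
    then show ?thesis using that[of 1 1] S_eq m by (simp add: arc_def)
  next
    case False
    have fin: "finite ?T" by (simp add: positions_def)
    define lo where "lo = Min ?T"
    define hi where "hi = Max ?T"
    have lo: "lo \<in> ?T" and hi: "hi \<in> ?T" using False fin by (simp_all add: lo_def hi_def)
    have lo_hi: "lo \<le> hi" using fin hi by (simp add: lo_def)
    have "{lo..hi} \<subseteq> ?T"
      using bundle_positions_convex[OF S_bundle m r lo hi] lo_hi by simp
    moreover have "?T \<subseteq> {lo..hi}" using fin by (auto simp: lo_def hi_def)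
    ultimately have "?T = {lo..<Suc hi}" by (simp add: atLeastLessThanSuc_atLeastAtMost)
    with S_eq have "S = arc m r lo (Suc hi)" by (simp add: arc_def)
    moreover have "0 < lo" using lo r by (auto simp: positions_def intro: Nat.gr0I)
    moreover have "Suc hi \<le> m" using hi by (simp add: positions_def)
    ultimately show ?thesis using that[of lo "Suc hi"] lo_hi by simp
  qed
qed

subsection \<open>Three-splits into arcs\<close>

lemma atLeastLessThan_union_eq_ordered:
  fixes p1 p2 q1 q2 x m :: nat
  assumes "{p1..<p2} \<union> {q1..<q2} = {x..<m}" "p1 < p2" "q1 < q2" "p2 \<le> q1"
  shows "p1 = x \<and> q1 = p2 \<and> q2 = m"
proof -
  have mem: "(p1 \<le> t \<and> t < p2) \<or> (q1 \<le> t \<and> t < q2) \<longleftrightarrow> x \<le> t \<and> t < m" for t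
    using assms(1) by (auto simp: set_eq_iff)
  have x_p1: "x \<le> p1" "p1 < m" using mem[of p1] assms(2) by arith+
  have q2_m: "q2 \<le> m" using mem[of "q2 - 1"] assms(3) by arith
  have "p1 \<le> x" using mem[of x] x_p1 assms(2-4) by arith
  moreover have "q1 \<le> p2" using mem[of p2] x_p1 q2_m assms(2-4) by arith
  moreover have "m \<le> q2" using mem[of q2] x_p1 assms(2-4) by arith
  ultimately show ?thesis using x_p1 q2_m assms(4) by arith
qed

lemma atLeastLessThan_partition2:
  fixes p1 p2 q1 q2 x m :: nat
  assumes "{p1..<p2} \<union> {q1..<q2} = {x..<m}" "{p1..<p2} \<inter> {q1..<q2} = {}" "x \<le> m"
  obtains y where "x \<le> y" "y \<le> m" "{p1..<p2} = {x..<y}" "{q1..<q2} = {y..<m}"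
    | y where "x \<le> y" "y \<le> m" "{q1..<q2} = {x..<y}" "{p1..<p2} = {y..<m}"
proof (cases "p1 < p2 \<and> q1 < q2")
  case False
  then consider "{p1..<p2} = {}" | "{q1..<q2} = {}" by fastforce
  then show ?thesis
    by cases (use assms(1,3) that in \<open>simp_all add: Un_commute\<close>)
next
  case True
  have "p2 \<le> q1 \<or> q2 \<le> p1"
  proof (rule ccontr)
    assume "\<not> ?thesis"
    then have "max p1 q1 \<in> {p1..<p2} \<inter> {q1..<q2}" using True by auto
    with assms(2) show False by blast
  qed
  then show ?thesis
  proof
    assume "p2 \<le> q1"
    with atLeastLessThan_union_eq_ordered[OF assms(1)] True have "p1 = x \<and> q1 = p2 \<and> q2 = m"
      by simp
    with True show ?thesis using that(1)[of p2] by simp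
  next
    assume "q2 \<le> p1"
    with atLeastLessThan_union_eq_ordered[of q1 q2 p1 p2 x m] assms(1) True
    have "q1 = x \<and> p1 = q2 \<and> p2 = m" by (simp add: Un_commute)
    with True show ?thesis using that(2)[of q2] by simp
  qed
qed

lemma arc_partition_after:
  assumes m: "0 < m" and bounds: "x \<le> m" "p2 \<le> m" "q2 \<le> m"
    and cover: "arc m r 0 x \<union> arc m r p1 p2 \<union> arc m r q1 q2 = {0..<m}"
    and disjoint: "arc m r 0 x \<inter> arc m r p1 p2 = {}" "arc m r 0 x \<inter> arc m r q1 q2 = {}"
      "arc m r p1 p2 \<inter> arc m r q1 q2 = {}"
  obtains y where "x \<le> y" "y \<le> m"
    "arc m r p1 p2 = arc m r x y \<and> arc m r q1 q2 = arc m r y m \<or>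
     arc m r q1 q2 = arc m r x y \<and> arc m r p1 p2 = arc m r y m"
proof -
  have inj: "inj_on (rot m r) {0..<m}" using inj_on_rot[of m r 0] by simp
  have sub: "{0..<x} \<subseteq> {0..<m}" "{p1..<p2} \<subseteq> {0..<m}" "{q1..<q2} \<subseteq> {0..<m}"
    using bounds by auto
  have disj_idx: "I \<inter> J = {}"
    if "rot m r ` I \<inter> rot m r ` J = {}" "I \<subseteq> {0..<m}" "J \<subseteq> {0..<m}" for I J
    using that inj_on_image_Int[OF inj, of I J] by simp
  have "rot m r ` ({0..<x} \<union> {p1..<p2} \<union> {q1..<q2}) = rot m r ` {0..<m}"
    using cover arc_full[OF m, of r 0] by (simp add: arc_def image_Un)
  then have "{0..<x} \<union> {p1..<p2} \<union> {q1..<q2} = {0..<m}"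
    using sub by (simp add: inj_on_image_eq_iff[OF inj])
  moreover have "{0..<x} \<inter> {p1..<p2} = {}" "{0..<x} \<inter> {q1..<q2} = {}"
    "{p1..<p2} \<inter> {q1..<q2} = {}"
    using disj_idx[OF _ sub(1) sub(2)] disj_idx[OF _ sub(1) sub(3)] disj_idx[OF _ sub(2) sub(3)]
      disjoint by (simp_all add: arc_def)
  ultimately have "{p1..<p2} \<union> {q1..<q2} = {0..<m} - {0..<x}" "{p1..<p2} \<inter> {q1..<q2} = {}"
    by blast+
  then have "{p1..<p2} \<union> {q1..<q2} = {x..<m}" "{p1..<p2} \<inter> {q1..<q2} = {}"
    by auto
  then show ?thesis
  proof (rule atLeastLessThan_partition2[OF _ _ \<open>x \<le> m\<close>])
    fix y assume "x \<le> y" "y \<le> m" "{p1..<p2} = {x..<y}" "{q1..<q2} = {y..<m}"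
    then show thesis using that[of y] by (simp add: arc_def)
  next
    fix y assume "x \<le> y" "y \<le> m" "{q1..<q2} = {x..<y}" "{p1..<p2} = {y..<m}"
    then show thesis using that[of y] by (simp add: arc_def)
  qed
qed

lemma three_labels_distinct:
  assumes "{h, p, q} = {1, 2, 3 :: nat}"
  shows "h \<noteq> p" "h \<noteq> q" "p \<noteq> q"
proof -
  have "card {h, p, q} = 3" using assms by simp
  then show "h \<noteq> p" "h \<noteq> q" "p \<noteq> q" by (auto simp: card_insert_if split: if_splits)
qed

lemma third_label:
  assumes "i \<in> {1, 2, 3}" "j \<in> {1, 2, 3}" "i \<noteq> j"
  obtains k where "{i, j, k} = {1, 2, 3 :: nat}"
  using assms by (auto simp: insert_commute)

lemma split3_iff_labels:
  assumes "{h, p, q} = {1, 2, 3 :: nat}"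
  shows "split3 m P \<longleftrightarrow> is_bundle m (P h) \<and> is_bundle m (P p) \<and> is_bundle m (P q) \<and>
    P h \<inter> P p = {} \<and> P h \<inter> P q = {} \<and> P p \<inter> P q = {} \<and> P h \<union> P p \<union> P q = {0..<m}"
    (is "_ \<longleftrightarrow> ?labelled")
proof -
  note distinct = three_labels_distinct[OF assms]
  have "split3 m P \<longleftrightarrow> (\<forall>k\<in>{h, p, q}. is_bundle m (P k)) \<and>
      (\<forall>k\<in>{h, p, q}. \<forall>l\<in>{h, p, q}. k \<noteq> l \<longrightarrow> P k \<inter> P l = {}) \<and>
      (\<Union>k\<in>{h, p, q}. P k) = {0..<m}"
    unfolding split3_def assms ..
  also have "\<dots> \<longleftrightarrow> ?labelled" using distinct by (auto simp: Int_commute Un_assoc)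
  finally show ?thesis .
qed

lemma split3_arc_form_nonempty:
  assumes m: "0 < m" and P: "split3 m P" and labels: "{h, p, q} = {1, 2, 3}" and ne: "P h \<noteq> {}"
  obtains r x y where "x \<le> y" "y \<le> m" "P h = arc m r 0 x"
    "P p = arc m r x y \<and> P q = arc m r y m \<or> P q = arc m r x y \<and> P p = arc m r y m"
proof -
  have bundles: "is_bundle m (P h)" "is_bundle m (P p)" "is_bundle m (P q)"
    and disjoint: "P h \<inter> P p = {}" "P h \<inter> P q = {}" "P p \<inter> P q = {}"
    and cover: "P h \<union> P p \<union> P q = {0..<m}"
    using P by (simp_all add: split3_iff_labels[OF labels])
  show ?thesis
  proof (cases "P h = {0..<m}")
    case True
    with disjoint cover have "P p = {}" "P q = {}" by auto
    with True show ?thesis using that[of m m 0] arc_full[OF m, of 0 0] by simp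
  next
    case False
    \<comment> \<open>Rotate so that \<open>P h\<close> starts at index 0; the other two bundles miss that good, so
      they are arcs inside \<open>[1, m]\<close>.\<close>
    have "P h \<subseteq> {0..<m}" using cover by auto
    then obtain g where g: "g < m" "g \<notin> P h" using False by fastforce
    then have "rot m g 0 \<notin> P h" by (simp add: rot_def)
    then obtain A B where AB: "0 < A" "A \<le> B" "B \<le> m" "P h = arc m g A B"
      using bundle_eq_arc[OF bundles(1) m] by blast
    define r where "r = g + A"
    define x where "x = B - A"
    have Ph: "P h = arc m r 0 x" using AB arc_shift[of m g A 0 x] by (simp add: r_def x_def)
    have x: "0 < x" "x \<le> m" using ne Ph AB by (auto simp: x_def)
    then have "rot m r 0 \<in> P h" by (simp add: Ph arc_def)
    with disjoint have "rot m r 0 \<notin> P p" "rot m r 0 \<notin> P q" by auto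
    obtain p1 p2 where p_arc: "p1 \<le> p2" "p2 \<le> m" "P p = arc m r p1 p2"
      using bundle_eq_arc[OF bundles(2) m \<open>rot m r 0 \<notin> P p\<close>] .
    obtain q1 q2 where q_arc: "q1 \<le> q2" "q2 \<le> m" "P q = arc m r q1 q2"
      using bundle_eq_arc[OF bundles(3) m \<open>rot m r 0 \<notin> P q\<close>] .
    obtain y where "x \<le> y" "y \<le> m"
      "P p = arc m r x y \<and> P q = arc m r y m \<or> P q = arc m r x y \<and> P p = arc m r y m"
      using arc_partition_after[OF m \<open>x \<le> m\<close> p_arc(2) q_arc(2), of r] disjoint cover
      unfolding Ph p_arc(3) q_arc(3) by blast
    then show ?thesis using that[of x y r] Ph by blast
  qed
qed

lemma split3_arc_form:
  assumes m: "0 < m" and P: "split3 m P" and a: "a \<in> {1, 2, 3}"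
  obtains r x y p q where "{a, p, q} = {1, 2, 3}" "x \<le> y" "y \<le> m"
    "P a = arc m r 0 x" "P p = arc m r x y" "P q = arc m r y m"
proof -
  note arc_form = that
  obtain p q where labels: "{a, p, q} = {1, 2, 3 :: nat}"
    using a by (auto simp: insert_commute)
  have swap: "{a, q, p} = {1, 2, 3 :: nat}" using labels by (simp add: insert_commute)
  show ?thesis
  proof (cases "P a = {}")
    case False
    from split3_arc_form_nonempty[OF m P labels False] obtain r x y
      where "x \<le> y" "y \<le> m" "P a = arc m r 0 x"
        "P p = arc m r x y \<and> P q = arc m r y m \<or> P q = arc m r x y \<and> P p = arc m r y m" .
    then show ?thesis using that labels swap by blast
  next
    case True
    \<comment> \<open>Put the empty bundle \<open>P a\<close> in front of a nonempty one\<close>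
    have empty_case: thesis if labels': "{a, p', q'} = {1, 2, 3 :: nat}" and ne: "P p' \<noteq> {}" for p' q'
    proof -
      have "{p', a, q'} = {1, 2, 3 :: nat}" using labels' by (simp add: insert_commute)
      from split3_arc_form_nonempty[OF m P this ne] obtain r x y
        where xy: "x \<le> y" "y \<le> m" "P p' = arc m r 0 x"
          and cases: "P a = arc m r x y \<and> P q' = arc m r y m \<or> P q' = arc m r x y \<and> P a = arc m r y m" .
      from cases True consider "arc m r x y = {}" "P q' = arc m r y m"
        | "arc m r y m = {}" "P q' = arc m r x y" by auto
      then have "P q' = arc m r x m" by cases (use xy in \<open>auto simp: arc_eq_empty_iff\<close>)
      with xy True show thesis using arc_form[of p' q' 0 x r] labels' by (simp add: arc_eq_empty_iff)
    qed
    have "P p \<noteq> {} \<or> P q \<noteq> {}"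
      using P m True by (auto simp: split3_iff_labels[OF labels])
    then show ?thesis using empty_case labels swap by blast
  qed
qed

definition arc_split :: "nat \<Rightarrow> nat \<Rightarrow> nat \<Rightarrow> nat \<Rightarrow> nat \<Rightarrow> nat \<Rightarrow> nat set" where
  "arc_split m r A B C k =
     (if k = 1 then arc m r A B else if k = 2 then arc m r B C else arc m r C (A + m))"

lemma split3_arc_split:
  assumes "0 < m" "A \<le> B" "B \<le> C" "C \<le> A + m"
  shows "split3 m (arc_split m r A B C)"
proof -
  have "arc m r A B \<union> arc m r B C \<union> arc m r C (A + m) = {0..<m}"
    using assms arc_union[of A B C] arc_union[of A C "A + m"] arc_full[of m r A] by simp
  then show ?thesis
    using assms arc_is_bundle arc_disjoint
    by (simp add: split3_iff_labels[of 1 2 3] arc_split_def)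
qed

lemma split3_exists: "\<exists>P. split3 m P"
proof (cases "m = 0")
  case True
  then have "split3 m (\<lambda>_. {})" by (simp add: split3_def is_bundle_def)
  then show ?thesis by blast
next
  case False
  then show ?thesis using split3_arc_split[of m 0 0 0] by auto
qed

subsection \<open>Values and maximin shares\<close>

lemma uset_mono:
  assumes "S \<subseteq> T" "T \<subseteq> {0..<m}" "\<forall>g<m. 0 \<le> w g"
  shows "uset w S \<le> uset w T"
  unfolding uset_def using assms by (intro sum_mono2) (auto intro: finite_subset)

lemma uset_arc_mono:
  assumes "0 < m" "\<forall>g<m. 0 \<le> w g" "A' \<le> A" "B \<le> B'"
  shows "uset w (arc m r A B) \<le> uset w (arc m r A' B')"
  using assms by (intro uset_mono[of _ _ m] arc_mono arc_subset)

lemma uset_nonneg: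
  assumes "S \<subseteq> {0..<m}" "\<forall>g<m. 0 \<le> w g"
  shows "0 \<le> uset w S"
  using uset_mono[of "{}" S m w] assms by (simp add: uset_def)

lemma split_uset_sum:
  assumes "split3 m P"
  shows "uset w (P 1) + uset w (P 2) + uset w (P 3) = uset w {0..<m}"
proof -
  have disjoint: "P 1 \<inter> P 2 = {}" "P 1 \<inter> P 3 = {}" "P 2 \<inter> P 3 = {}"
    and cover: "P 1 \<union> P 2 \<union> P 3 = {0..<m}"
    using assms by (simp_all add: split3_iff_labels[of 1 2 3])
  have finite: "finite (P 1)" "finite (P 2)" "finite (P 3)"
    using cover by (auto intro: finite_subset)
  have "uset w {0..<m} = uset w (P 1 \<union> P 2) + uset w (P 3)"
    unfolding cover[symmetric] uset_def using finite disjoint by (intro sum.union_disjoint) auto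
  also have "uset w (P 1 \<union> P 2) = uset w (P 1) + uset w (P 2)"
    unfolding uset_def using finite disjoint by (intro sum.union_disjoint) auto
  finally show ?thesis by simp
qed

lemma exists_piece_ge_third:
  assumes "split3 m P" "3 * v \<le> uset w {0..<m}"
  shows "\<exists>k\<in>{1, 2, 3}. v \<le> uset w (P k)"
proof (rule ccontr)
  assume "\<not> ?thesis"
  then have "uset w (P 1) < v" "uset w (P 2) < v" "uset w (P 3) < v" by auto
  with split_uset_sum[OF assms(1), of w] assms(2) show False by linarith
qed

lemma split_value_le: "k \<in> {1, 2, 3} \<Longrightarrow> split_value w P \<le> uset w (P k)"
  unfolding split_value_def by (intro Min_le) auto

lemma split_value_le_third:
  assumes "split3 m P"
  shows "3 * split_value w P \<le> uset w {0..<m}"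
proof -
  have "split_value w P \<le> uset w (P 1)" "split_value w P \<le> uset w (P 2)"
    "split_value w P \<le> uset w (P 3)"
    by (simp_all add: split_value_le)
  with split_uset_sum[OF assms, of w] show ?thesis by linarith
qed

lemma mms_le_third: "3 * mms m w \<le> uset w {0..<m}"
proof -
  have "mms m w \<le> uset w {0..<m} / 3"
    unfolding mms_def
  proof (rule cSup_least)
    show "{split_value w P |P. split3 m P} \<noteq> {}" using split3_exists[of m] by blast
  next
    fix v assume "v \<in> {split_value w P |P. split3 m P}"
    then obtain P where "split3 m P" "v = split_value w P" by blast
    then show "v \<le> uset w {0..<m} / 3" using split_value_le_third[of m P w] by simp
  qed
  then show ?thesis by simp
qed

lemma mms_nonneg:
  assumes "\<forall>g<m. 0 \<le> w g"
  shows "0 \<le> mms m w"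
proof -
  obtain P where P: "split3 m P" using split3_exists ..
  have "0 \<le> uset w (P k)" if "k \<in> {1, 2, 3}" for k
    using P that assms by (intro uset_nonneg) (auto simp: split3_def is_bundle_def)
  then have "0 \<le> split_value w P" by (simp add: split_value_def)
  also have "split_value w P \<le> mms m w"
    unfolding mms_def
  proof (rule cSup_upper)
    show "split_value w P \<in> {split_value w P |P. split3 m P}" using P by blast
    show "bdd_above {split_value w P |P. split3 m P}"
      using split_value_le_third[of m _ w] by (intro bdd_aboveI[of _ "uset w {0..<m} / 3"]) force
  qed
  finally show ?thesis .
qed

lemma mms_split_le:
  assumes "mms_split m w P" "k \<in> {1, 2, 3}"
  shows "mms m w \<le> uset w (P k)"
  using assms split_value_le[of k w P] by (simp add: mms_split_def)

definition satisfied :: "nat \<Rightarrow> (nat \<Rightarrow> nat \<Rightarrow> real) \<Rightarrow> real \<Rightarrow> nat \<Rightarrow> nat set \<Rightarrow> bool" where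
  "satisfied m u c n S \<longleftrightarrow> c * mms m (u n) \<le> uset (u n) S"

lemma satisfied_mono:
  assumes "satisfied m u c n S" "S \<subseteq> T" "T \<subseteq> {0..<m}" "\<forall>g<m. 0 \<le> u n g"
  shows "satisfied m u c n T"
  using assms uset_mono[of S T m "u n"] by (auto simp: satisfied_def)

lemma satisfied_of_mms_le:
  assumes "mms m (u n) \<le> uset (u n) S" "c \<le> 1" "\<forall>g<m. 0 \<le> u n g"
  shows "satisfied m u c n S"
  using assms mult_right_mono[OF assms(2) mms_nonneg[OF assms(3)]]
  by (simp add: satisfied_def)

lemma mms_split_satisfied:
  assumes "mms_split m (u n) P" "k \<in> {1, 2, 3}" "c \<le> 1" "\<forall>g<m. 0 \<le> u n g"
  shows "satisfied m u c n (P k)"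
  using satisfied_of_mms_le[where u = u and n = n, OF mms_split_le[OF assms(1,2)] assms(3,4)] .

subsection \<open>Allocations\<close>

lemma sufficient_alloc_assign:
  assumes T: "split3 m T" and agents: "{i, j, k} = {1, 2, 3}" and pieces: "{p, q, r} = {1, 2, 3}"
    and "satisfied m u c i (T p)" "satisfied m u c j (T q)" "satisfied m u c k (T r)"
  shows "\<exists>A. sufficient_alloc m u c A"
proof -
  let ?A = "\<lambda>n. if n = i then T p else if n = j then T q else T r"
  have A: "?A i = T p" "?A j = T q" "?A k = T r" using three_labels_distinct[OF agents] by auto
  have "is_bundle m (T p) \<and> is_bundle m (T q) \<and> is_bundle m (T r) \<and> T p \<inter> T q = {} \<and>
      T p \<inter> T r = {} \<and> T q \<inter> T r = {} \<and> T p \<union> T q \<union> T r = {0..<m}"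
    using T unfolding split3_iff_labels[OF pieces] .
  then have "split3 m ?A" unfolding split3_iff_labels[OF agents] A .
  moreover have "\<forall>n\<in>{1, 2, 3}. satisfied m u c n (?A n)"
    unfolding agents[symmetric] using A assms(4-6) by auto
  ultimately have "sufficient_alloc m u c ?A" by (simp add: sufficient_alloc_def satisfied_def)
  then show ?thesis by (rule exI[of _ ?A])
qed

lemma sufficient_alloc_by_matching:
  assumes T: "split3 m T" and agents: "{i, j, k} = {1, 2, 3}"
    and i: "satisfied m u c i (T 1)" "satisfied m u c i (T 2) \<or> satisfied m u c i (T 3)"
    and j: "satisfied m u c j (T 2)" "satisfied m u c j (T 3)"
    and k: "\<exists>l\<in>{1, 2, 3}. satisfied m u c k (T l)"
  shows "\<exists>A. sufficient_alloc m u c A"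
proof -
  note assign = sufficient_alloc_assign[OF T agents]
  from k consider "satisfied m u c k (T 1)" | "satisfied m u c k (T 2)" | "satisfied m u c k (T 3)"
    by blast
  then show ?thesis
  proof cases
    case 1
    from i(2) show ?thesis
    proof
      assume i2: "satisfied m u c i (T 2)"
      show ?thesis by (rule assign[of 2 3 1]) (use i2 j 1 in auto)
    next
      assume i3: "satisfied m u c i (T 3)"
      show ?thesis by (rule assign[of 3 2 1]) (use i3 j 1 in auto)
    qed
  next
    case 2
    show ?thesis by (rule assign[of 1 3 2]) (use i j 2 in auto)
  next
    case 3
    show ?thesis by (rule assign[of 1 2 3]) (use i j 3 in auto)
  qed
qed

lemma sufficient_alloc_of_arcs:
  assumes m: "0 < m" and agents: "{i, j, k} = {1, 2, 3}"
    and nonneg: "\<forall>n\<in>{1, 2, 3}. \<forall>g<m. 0 \<le> u n g" and c: "c \<le> 1"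
    and cuts: "\<alpha> \<le> \<beta>" "\<beta> \<le> e" "e \<le> f" "f \<le> m" "\<beta> \<le> \<gamma>" "\<gamma> \<le> \<alpha> + m"
    and i: "satisfied m u c i (arc m s \<alpha> \<beta>)" "satisfied m u c i (arc m s \<beta> \<gamma>)"
      "satisfied m u c i (arc m s \<gamma> (\<alpha> + m))"
    and j: "satisfied m u c j (arc m s e f)" "satisfied m u c j (arc m s f m)"
  shows "\<exists>A. sufficient_alloc m u c A"
proof -
  let ?T = "arc_split m s \<alpha> \<beta> f"
  have T: "split3 m ?T" using cuts by (intro split3_arc_split[OF m]) auto
  have T_arcs: "?T 1 = arc m s \<alpha> \<beta>" "?T 2 = arc m s \<beta> f" "?T 3 = arc m s f (\<alpha> + m)"
    by (simp_all add: arc_split_def)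
  have nonneg': "\<forall>g<m. 0 \<le> u n g" if "n \<in> {i, j, k}" for n
    using nonneg that unfolding agents by blast
  note grow = satisfied_mono[OF _ arc_mono arc_subset[OF m] nonneg']
  have i': "satisfied m u c i (?T 2) \<or> satisfied m u c i (?T 3)"
  proof (cases "\<gamma> \<le> f")
    case True
    then show ?thesis using grow[OF i(2), of \<beta> f] by (simp add: T_arcs)
  next
    case False
    then show ?thesis using grow[OF i(3), of f "\<alpha> + m"] by (simp add: T_arcs)
  qed
  have j': "satisfied m u c j (?T 2)" "satisfied m u c j (?T 3)"
    using grow[OF j(1), of \<beta> f] grow[OF j(2), of f "\<alpha> + m"] cuts by (simp_all add: T_arcs)
  obtain l where l: "l \<in> {1, 2, 3}" "mms m (u k) \<le> uset (u k) (?T l)"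
    using exists_piece_ge_third[OF T mms_le_third] by blast
  then have k': "\<exists>l\<in>{1, 2, 3}. satisfied m u c k (?T l)"
    using satisfied_of_mms_le[where u = u and n = k, OF l(2) c] nonneg' by auto
  have "satisfied m u c i (?T 1)" using i(1) by (simp add: arc_split_def)
  from sufficient_alloc_by_matching[OF T agents this i' j' k'] show ?thesis .
qed

lemma sufficient_alloc_empty_cycle:
  assumes "m = 0" "split3 m A" "0 \<le> c"
  shows "sufficient_alloc m u c A"
proof -
  have "A k = {}" if "k \<in> {1, 2, 3}" for k
    using assms(1,2) that by (auto simp: split3_def)
  moreover have "mms m (u k) \<le> 0" for k
    using mms_le_third[of m "u k"] assms(1) by (simp add: uset_def)
  ultimately show ?thesis
    using assms(2,3) by (simp add: sufficient_alloc_def uset_def mult_nonneg_nonpos)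
qed

lemma arc_split_with_first_inside:
  fixes w :: "nat \<Rightarrow> real"
  assumes m: "0 < m" and w: "\<forall>g<m. 0 \<le> w g"
    and bounds: "e \<le> m" "d < m" "X \<le> Y" "Y \<le> m"
    and inter: "t \<le> uset w (arc m s d (d + X) \<inter> arc m s 0 e)"
    and first: "t \<le> uset w (arc m s d (d + X))"
    and second: "t \<le> uset w (arc m s (d + X) (d + Y))"
    and third: "t \<le> uset w (arc m s (d + Y) (d + m))"
  obtains \<alpha> \<beta> \<gamma> where "\<alpha> \<le> \<beta>" "\<beta> \<le> e" "\<beta> \<le> \<gamma>" "\<gamma> \<le> \<alpha> + m"
    "t \<le> uset w (arc m s \<alpha> \<beta>)" "t \<le> uset w (arc m s \<beta> \<gamma>)" "t \<le> uset w (arc m s \<gamma> (\<alpha> + m))"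
proof -
  have grow: "t \<le> uset w (arc m s A' B')"
    if "t \<le> uset w (arc m s A B)" "A' \<le> A" "B \<le> B'" for A B A' B'
    using that uset_arc_mono[OF m w] by (meson order_trans)
  have shifted: "t \<le> uset w (arc m s (d + X - m) (d + Y - m))" "t \<le> uset w (arc m s (d + Y - m) d)"
    if "m < d + X"
    using second third arc_sub_period[of m "d + X" "d + Y"] arc_sub_period[of m "d + Y" "d + m"]
      that bounds
    by simp_all
  consider (inner) "d + X \<le> m" "d < e" | (disjoint) "d + X \<le> m" "e \<le> d"
    | (wrap) "m < d + X" "e \<le> d" | (cover) "m < d + X" "d < e"
    by linarith
  then show ?thesis
  proof cases
    case inner
    define \<beta> where "\<beta> = min (d + X) e"
    have "arc m s d (d + X) \<inter> arc m s 0 e = arc m s d \<beta>"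
      using arc_Int[of 0 d 0 "d + X" m e s] inner bounds by (simp add: \<beta>_def max_def)
    with inter have "t \<le> uset w (arc m s d \<beta>)" by simp
    moreover have "t \<le> uset w (arc m s \<beta> (d + Y))" using grow[OF second] by (simp add: \<beta>_def)
    ultimately show ?thesis
      using that[of d \<beta> "d + Y"] third inner bounds by (simp add: \<beta>_def)
  next
    case disjoint
    then have "arc m s d (d + X) \<inter> arc m s 0 e = {}"
      using arc_disjoint[of e d "d + X" 0 m s] by (simp add: Int_commute)
    with inter have "t \<le> 0" by (simp add: uset_def)
    moreover have "0 \<le> uset w (arc m s 0 m)" using uset_nonneg[OF arc_subset[OF m] w] .
    ultimately show ?thesis using that[of 0 0 0] by (simp add: uset_def)
  next
    case wrap
    define \<beta> where "\<beta> = min (d + X - m) e"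
    have "arc m s d (d + X) \<inter> arc m s 0 e = arc m s 0 \<beta>"
      unfolding \<beta>_def using wrap bounds by (intro arc_Int_wrapping) auto
    with inter have "t \<le> uset w (arc m s 0 \<beta>)" by simp
    moreover have "t \<le> uset w (arc m s \<beta> (d + Y - m))"
      using grow[OF shifted(1), of \<beta>] wrap by (simp add: \<beta>_def)
    moreover have "t \<le> uset w (arc m s (d + Y - m) m)"
      using grow[OF shifted(2)] wrap bounds by simp
    ultimately show ?thesis
      using that[of 0 \<beta> "d + Y - m"] wrap bounds by (simp add: \<beta>_def)
  next
    case cover
    \<comment> \<open>\<open>P a\<close> and \<open>arc m s 0 e\<close> cover the cycle, so the other two bundles lie inside the latter\<close>
    show ?thesis
      using that[of "d + X - m" "d + Y - m" d] shifted first cover bounds by simp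
  qed
qed

lemma satisfied_arc_split_inside:
  assumes m: "0 < m" and nonneg: "\<forall>g<m. 0 \<le> u n g" and c: "c \<le> 1"
    and P: "mms_split m (u n) P" and a: "a \<in> {1, 2, 3}" and e: "e \<le> m"
    and inter: "satisfied m u c n (P a \<inter> arc m s 0 e)"
  obtains \<alpha> \<beta> \<gamma> where "\<alpha> \<le> \<beta>" "\<beta> \<le> e" "\<beta> \<le> \<gamma>" "\<gamma> \<le> \<alpha> + m"
    "satisfied m u c n (arc m s \<alpha> \<beta>)" "satisfied m u c n (arc m s \<beta> \<gamma>)"
    "satisfied m u c n (arc m s \<gamma> (\<alpha> + m))"
proof -
  have "split3 m P" using P by (simp add: mms_split_def)
  from split3_arc_form[OF m this a] obtain r X Y p q where labels: "{a, p, q} = {1, 2, 3}"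
    and XY: "X \<le> Y" "Y \<le> m"
    and P_arcs: "P a = arc m r 0 X" "P p = arc m r X Y" "P q = arc m r Y m" .
  obtain d where d: "d < m" and rebase: "\<And>A B. arc m r A B = arc m s (d + A) (d + B)"
    using arc_rebase[OF m, of r s] by blast
  have P_sat: "satisfied m u c n (P l)" if "l \<in> {a, p, q}" for l
    using mms_split_satisfied[where u = u and n = n, OF P _ c nonneg] that labels by blast
  have "c * mms m (u n) \<le> uset (u n) (arc m s d (d + X))"
    "c * mms m (u n) \<le> uset (u n) (arc m s (d + X) (d + Y))"
    "c * mms m (u n) \<le> uset (u n) (arc m s (d + Y) (d + m))"
    using P_sat[of a] P_sat[of p] P_sat[of q] P_arcs by (simp_all add: rebase satisfied_def)
  moreover have "c * mms m (u n) \<le> uset (u n) (arc m s d (d + X) \<inter> arc m s 0 e)"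
    using inter P_arcs(1) by (simp add: rebase satisfied_def)
  ultimately obtain \<alpha> \<beta> \<gamma> where "\<alpha> \<le> \<beta>" "\<beta> \<le> e" "\<beta> \<le> \<gamma>" "\<gamma> \<le> \<alpha> + m"
    "c * mms m (u n) \<le> uset (u n) (arc m s \<alpha> \<beta>)"
    "c * mms m (u n) \<le> uset (u n) (arc m s \<beta> \<gamma>)"
    "c * mms m (u n) \<le> uset (u n) (arc m s \<gamma> (\<alpha> + m))"
    using arc_split_with_first_inside[OF m nonneg e d XY] by blast
  then show ?thesis using that[of \<alpha> \<beta> \<gamma>] by (simp add: satisfied_def)
qed

theorem lemma4p11:
  fixes m :: nat and u :: "nat \<Rightarrow> nat \<Rightarrow> real" and c :: real
    and i j :: nat and P Q :: "nat \<Rightarrow> nat set" and a b :: nat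
  assumes nonneg: "\<forall>k\<in>{1,2,3}. \<forall>g<m. u k g \<ge> 0"
    and c_pos: "0 < c" and c_le: "c \<le> 1"
    and ij: "i \<in> {1,2,3}" "j \<in> {1,2,3}" "i \<noteq> j"
    and P: "mms_split m (u i) P" and a: "a \<in> {1,2,3}"
    and Q: "mms_split m (u j) Q" and b: "b \<in> {1,2,3}"
    and inter: "uset (u i) (P a \<inter> Q b) \<ge> c * mms m (u i)"
  shows "\<exists>A. sufficient_alloc m u c A"
proof (cases "m = 0")
  case True
  have "split3 m P" using P by (simp add: mms_split_def)
  with True c_pos have "sufficient_alloc m u c P" by (intro sufficient_alloc_empty_cycle) auto
  then show ?thesis by (rule exI[of _ P])
next
  case False
  then have m: "0 < m" by simp
  obtain k where agents: "{i, j, k} = {1, 2, 3}" using third_label[OF ij] .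
  have nonneg_i: "\<forall>g<m. 0 \<le> u i g" and nonneg_j: "\<forall>g<m. 0 \<le> u j g" using nonneg ij by auto
  have "split3 m Q" using Q by (simp add: mms_split_def)
  from split3_arc_form[OF m this b] obtain s e f q2 q3 where Q_labels: "{b, q2, q3} = {1, 2, 3}"
    and ef: "e \<le> f" "f \<le> m"
    and Q_arcs: "Q b = arc m s 0 e" "Q q2 = arc m s e f" "Q q3 = arc m s f m" .
  have "e \<le> m" using ef by simp
  moreover have "satisfied m u c i (P a \<inter> arc m s 0 e)"
    using inter Q_arcs(1) by (simp add: satisfied_def)
  ultimately obtain \<alpha> \<beta> \<gamma> where cuts: "\<alpha> \<le> \<beta>" "\<beta> \<le> e" "\<beta> \<le> \<gamma>" "\<gamma> \<le> \<alpha> + m"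
    and i_sat: "satisfied m u c i (arc m s \<alpha> \<beta>)" "satisfied m u c i (arc m s \<beta> \<gamma>)"
      "satisfied m u c i (arc m s \<gamma> (\<alpha> + m))"
    using satisfied_arc_split_inside[where u = u and n = i, OF m nonneg_i c_le P a] by blast
  have "satisfied m u c j (Q q2)" "satisfied m u c j (Q q3)"
    using mms_split_satisfied[where u = u and n = j, OF Q _ c_le nonneg_j] Q_labels by blast+
  then show ?thesis
    using sufficient_alloc_of_arcs[OF m agents nonneg c_le cuts(1,2) ef cuts(3,4) i_sat] Q_arcs
    by simp
qed

end
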